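(* Every connected threshold graph on $n\geq 2$ vertices is isomorphic to an induced subgraph of the anti-regular graph $A_{2n-2}$. More precisely, let $G$ be a connected threshold graph with binary string $b=0^{s_1}1^{t_1}\cdots 0^{s_k}1^{t_k}$ (all $s_i,t_i\geq 1$) and $n=\sum_{i=1}^k(s_i+t_i)$ vertices. Let $N=2(n-k)$ if $s_1=1$ and $N=2(n-k)-1$ if $s_1\geq 2$. Then $G$ is an induced subgraph of $A_N$, and $A_N$ is the smallest anti-regular graph containing $G$ as an induced subgraph.
   Context: Threshold graphs from binary strings: given $b=b_1b_2\cdots b_n\in\{0,1\}^n$ with $b_1=0$, let $G_1$ be a single vertex, and for $j=2,\ldots,n$ obtain $G_j$ from $G_{j-1}$ by adding a new vertex which is adjacent to all previous vertices if $b_j=1$ and isolated if $b_j=0$; $G(b)=G_n$ and $b$ is called the binary string of $G(b)$. $G(b)$ is connected iff $b_n=1$. The notation $0^{s}$ (resp. $1^t$) denotes $s$ consecutive zeros (resp. $t$ consecutive ones). The anti-regular graph $A_m$ is $G(b)$ with $b=0101\cdots01$ (length $m$) when $m$ is even and $b=00101\cdots01$ (length $m$) when $m$ is odd. *)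

theory Defs
  imports Main
begin

(* Binary strings are bool lists (True = 1, False = 0); position j (0-indexed)
   corresponds to b_{j+1}.  Vertices of G(b) are 0..<length b, vertex j being the
   one added at step j+1. *)

definition thr_adj :: "bool list \<Rightarrow> nat \<Rightarrow> nat \<Rightarrow> bool" where
  "thr_adj b i j \<longleftrightarrow> i \<noteq> j \<and> i < length b \<and> j < length b \<and> b ! (max i j)"

definition induced_sub :: "bool list \<Rightarrow> bool list \<Rightarrow> bool" where
  "induced_sub b c \<longleftrightarrow>
     (\<exists>f. inj_on f {0..<length b} \<and> f ` {0..<length b} \<subseteq> {0..<length c} \<and>
          (\<forall>i<length b. \<forall>j<length b. thr_adj b i j \<longleftrightarrow> thr_adj c (f i) (f j)))"

definition antireg :: "nat \<Rightarrow> bool list" where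
  "antireg m = (if even m then map (\<lambda>i. odd i) [0..<m]
                else map (\<lambda>i. 1 \<le> i \<and> even i) [0..<m])"

definition block_string :: "nat list \<Rightarrow> nat list \<Rightarrow> bool list" where
  "block_string s t = concat (map (\<lambda>i. replicate (s ! i) False @ replicate (t ! i) True)
                                  [0..<length s])"

end

(* An induced copy of G(b) inside a threshold graph G(c) can always be chosen
   order-preserving: the vertex mapped to the largest vertex of the copy is a twin of the
   last vertex of G(b) (both dominate, or both are isolated from, all other vertices), so
   the two may be swapped, and induction does the rest.  Hence G(b) is an induced subgraph
   of G(c) iff b_2 ... b_n occurs as a subsequence of c_2 c_3 ... .
   In A_M the bits from the second one on alternate, so consecutive equal bits of b must be
   mapped two positions apart and different ones may be adjacent: G(b) embeds into A_M iff
   M >= n + r, plus one if the second vertex of A_M carries the wrong bit, where r counts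
   the equal adjacent pairs among b_2 ... b_n.  A block string with k blocks has 2k - 1 bit
   changes, so r = n - 2k - 1 + [s_1 = 1], i.e. n + r = N. *)

theory Submission
  imports Defs "HOL-Combinatorics.Transposition"
begin

lemma thr_adj_sym: "thr_adj b i j = thr_adj b j i"
  unfolding thr_adj_def by (auto simp: max.commute)

lemma thr_adj_less: "i < j \<Longrightarrow> j < length b \<Longrightarrow> thr_adj b i j = b ! j"
  unfolding thr_adj_def by (simp add: max_def)

lemma thr_adj_take: "i < l \<Longrightarrow> j < l \<Longrightarrow> l \<le> length b \<Longrightarrow> thr_adj (take l b) i j = thr_adj b i j"
  unfolding thr_adj_def by (auto simp: max_def)

definition thr_embedding :: "bool list \<Rightarrow> bool list \<Rightarrow> (nat \<Rightarrow> nat) \<Rightarrow> bool" where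
  "thr_embedding b c f \<longleftrightarrow> inj_on f {..<length b} \<and> f ` {..<length b} \<subseteq> {..<length c} \<and>
     (\<forall>i<length b. \<forall>j<length b. thr_adj b i j \<longleftrightarrow> thr_adj c (f i) (f j))"

lemma induced_sub_iff_thr_embedding: "induced_sub b c \<longleftrightarrow> (\<exists>f. thr_embedding b c f)"
  unfolding induced_sub_def thr_embedding_def by (simp add: atLeast0LessThan)

definition bit_embedding :: "bool list \<Rightarrow> bool list \<Rightarrow> (nat \<Rightarrow> nat) \<Rightarrow> bool" where
  "bit_embedding b c h \<longleftrightarrow> strict_mono_on {..<length b} h \<and> (\<forall>i<length b. h i < length c) \<and>
     (\<forall>i. 1 \<le> i \<longrightarrow> i < length b \<longrightarrow> c ! h i = b ! i)"

lemma thr_embedding_if_bit_embedding: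
  assumes "bit_embedding b c h"
  shows "thr_embedding b c h"
proof -
  have mono: "strict_mono_on {..<length b} h" and rng: "\<And>i. i < length b \<Longrightarrow> h i < length c"
    and bits: "\<And>i. 1 \<le> i \<Longrightarrow> i < length b \<Longrightarrow> c ! h i = b ! i"
    using assms unfolding bit_embedding_def by auto
  have adj_less: "thr_adj b i j = thr_adj c (h i) (h j)" if "i < j" "j < length b" for i j
  proof -
    have "h i < h j" using mono that by (auto intro: strict_mono_onD)
    then show ?thesis using that rng bits by (simp add: thr_adj_less)
  qed
  have "thr_adj b i j = thr_adj c (h i) (h j)" if "i < length b" "j < length b" for i j
    using adj_less[of i j] adj_less[of j i] that thr_adj_sym[of b] thr_adj_sym[of c]
    by (cases i j rule: linorder_cases) (auto simp: thr_adj_def)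
  then show ?thesis
    using strict_mono_on_imp_inj_on[OF mono] rng unfolding thr_embedding_def by auto
qed

lemma transpose_twins_automorphism:
  assumes irrefl: "\<And>x. \<not> E x x" and sym: "\<And>x y. E x y = E y x"
    and twins: "\<And>x. x \<noteq> j \<Longrightarrow> x \<noteq> l \<Longrightarrow> E x j = E x l"
  shows "E (transpose j l x) (transpose j l y) = E x y"
  by (auto simp: transpose_def irrefl) (metis sym twins)+

lemma thr_embedding_comp_transpose:
  assumes f: "thr_embedding b c f" and "j < length b" "l < length b"
    and twins: "\<And>x. x \<noteq> j \<Longrightarrow> x \<noteq> l \<Longrightarrow> thr_adj b x j = thr_adj b x l"
  shows "thr_embedding b c (f \<circ> transpose j l)"
proof -
  have perm: "transpose j l ` {..<length b} = {..<length b}"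
    using assms(2,3) by simp
  have irrefl: "\<not> thr_adj b x x" for x
    by (simp add: thr_adj_def)
  have aut: "thr_adj b (transpose j l x) (transpose j l y) = thr_adj b x y" for x y
    by (rule transpose_twins_automorphism[OF irrefl thr_adj_sym twins])
  have inj: "inj_on f {..<length b}" and img: "f ` {..<length b} \<subseteq> {..<length c}"
    and adj: "\<And>x y. x < length b \<Longrightarrow> y < length b \<Longrightarrow> thr_adj b x y = thr_adj c (f x) (f y)"
    using f unfolding thr_embedding_def by auto
  have "inj_on (f \<circ> transpose j l) {..<length b}"
    using inj perm by (intro comp_inj_on) auto
  moreover have "(f \<circ> transpose j l) ` {..<length b} \<subseteq> {..<length c}"
    using img by (metis image_comp perm)
  moreover have "thr_adj b x y = thr_adj c ((f \<circ> transpose j l) x) ((f \<circ> transpose j l) y)"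
    if "x < length b" "y < length b" for x y
    using adj[of "transpose j l x" "transpose j l y"] aut[of x y] perm that by auto
  ultimately show ?thesis
    unfolding thr_embedding_def by blast
qed

lemma thr_embedding_last_to_Max:
  assumes f: "thr_embedding b c f" and len: "length b = Suc l" and "0 < l"
  obtains g where "thr_embedding b c g" "\<And>x. x < l \<Longrightarrow> g x < g l" "c ! g l = b ! l"
proof -
  \<comment> \<open>The preimage \<open>j\<close> of the largest image vertex is a twin of the last vertex \<open>l\<close>.\<close>
  define u where "u = Max (f ` {..<Suc l})"
  have "u \<in> f ` {..<Suc l}"
    unfolding u_def by (rule Max_in) auto
  then obtain j where j: "j < Suc l" "f j = u"
    by auto
  have inj: "inj_on f {..<Suc l}" and rng: "\<And>x. x < Suc l \<Longrightarrow> f x < length c"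
    and adj: "\<And>x y. x < Suc l \<Longrightarrow> y < Suc l \<Longrightarrow> thr_adj b x y = thr_adj c (f x) (f y)"
    using f len unfolding thr_embedding_def by auto
  have below: "f x < u" if "x < Suc l" "x \<noteq> j" for x
  proof -
    have "f x \<le> u" using that unfolding u_def by simp
    moreover have "f x \<noteq> f j" using inj that j(1) by (auto dest: inj_onD)
    ultimately show ?thesis using j(2) by simp
  qed
  have adj_j: "thr_adj b x j = c ! u" if "x < Suc l" "x \<noteq> j" for x
    using adj[OF that(1) j(1)] below[OF that] rng[OF j(1)] j(2) by (simp add: thr_adj_less)
  have cu: "c ! u = b ! l"
  proof (cases "j = l")
    case True
    then show ?thesis using adj_j[of 0] \<open>0 < l\<close> len by (simp add: thr_adj_less)
  next
    case False
    then show ?thesis using adj_j[of l] j(1) len by (simp add: thr_adj_sym thr_adj_less)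
  qed
  have twins: "thr_adj b x j = thr_adj b x l" if "x \<noteq> j" "x \<noteq> l" for x
  proof (cases "x < Suc l")
    case True
    then show ?thesis using adj_j that cu len by (simp add: thr_adj_less)
  next
    case False
    then show ?thesis using len by (simp add: thr_adj_def)
  qed
  show thesis
  proof
    show "thr_embedding b c (f \<circ> transpose j l)"
      using thr_embedding_comp_transpose[OF f] j(1) len twins by simp
    show "c ! (f \<circ> transpose j l) l = b ! l"
      using j(2) cu by simp
    show "(f \<circ> transpose j l) x < (f \<circ> transpose j l) l" if "x < l" for x
      using below[of "transpose j l x"] that j by (auto simp: transpose_def)
  qed
qed

lemma bit_embedding_if_thr_embedding:
  "thr_embedding b c f \<Longrightarrow> \<exists>h. bit_embedding b c h"
proof (induction "length b" arbitrary: b c f)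
  case 0
  then show ?case by (simp add: bit_embedding_def)
next
  case (Suc l)
  show ?case
  proof (cases "l = 0")
    case True
    then show ?thesis
      using Suc.prems Suc.hyps(2)[symmetric]
      by (intro exI[of _ f]) (auto simp: bit_embedding_def thr_embedding_def strict_mono_on_def)
  next
    case False
    then obtain g where g: "thr_embedding b c g" and below: "\<And>x. x < l \<Longrightarrow> g x < g l"
      and last: "c ! g l = b ! l"
      using thr_embedding_last_to_Max[OF Suc.prems Suc.hyps(2)[symmetric]] by blast
    have gl: "g l < length c"
      using g Suc.hyps(2) unfolding thr_embedding_def by (metis image_subset_iff lessI lessThan_iff)
    have "thr_embedding (take l b) (take (g l) c) g"
      using g Suc.hyps(2) below gl
      unfolding thr_embedding_def by (auto simp: thr_adj_take inj_on_subset)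
    then obtain h where h: "bit_embedding (take l b) (take (g l) c) h"
      using Suc.hyps(1)[of "take l b"] Suc.hyps(2) by fastforce
    have "bit_embedding b c (h(l := g l))"
      using h gl last Suc.hyps(2)[symmetric]
      unfolding bit_embedding_def strict_mono_on_def by (auto simp: less_Suc_eq)
    then show ?thesis by blast
  qed
qed

lemma induced_sub_iff_bit_embedding: "induced_sub b c \<longleftrightarrow> (\<exists>h. bit_embedding b c h)"
  using bit_embedding_if_thr_embedding thr_embedding_if_bit_embedding
  unfolding induced_sub_iff_thr_embedding by blast

lemma length_antireg [simp]: "length (antireg M) = M"
  by (simp add: antireg_def)

lemma antireg_nth: "1 \<le> p \<Longrightarrow> p < M \<Longrightarrow> antireg M ! p = odd (M + p)"
  by (auto simp: antireg_def)

definition repeats :: "bool list \<Rightarrow> nat \<Rightarrow> nat" where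
  "repeats b j = length (filter (\<lambda>i. b ! i = b ! Suc i) [1..<j])"

lemma repeats_Suc:
  "1 \<le> j \<Longrightarrow> repeats b (Suc j) = repeats b j + (if b ! j = b ! Suc j then 1 else 0)"
  by (simp add: repeats_def)

lemma bit_embedding_antireg_parity:
  assumes "bit_embedding b (antireg M) h" "1 \<le> j" "j < length b"
  shows "odd (M + h j) = b ! j" and "0 < h j"
proof -
  have "h 0 < h j" "h j < M"
    using assms unfolding bit_embedding_def by (auto intro: strict_mono_onD)
  then show "odd (M + h j) = b ! j" "0 < h j"
    using assms antireg_nth[of "h j" M] unfolding bit_embedding_def by auto
qed

lemma bit_embedding_antireg_gap:
  assumes h: "bit_embedding b (antireg M) h" and j: "1 \<le> j" "Suc j < length b"
  shows "h j + (if b ! j = b ! Suc j then 2 else 1) \<le> h (Suc j)"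
proof -
  have "h j < h (Suc j)"
    using h j unfolding bit_embedding_def by (auto intro: strict_mono_onD)
  moreover have "h (Suc j) \<noteq> Suc (h j)" if "b ! j = b ! Suc j"
  proof -
    have "odd (M + h j) = odd (M + h (Suc j))"
      using bit_embedding_antireg_parity(1)[OF h] j that by auto
    then show ?thesis by auto
  qed
  ultimately show ?thesis
    by (auto simp: Suc_le_eq)
qed

lemma bit_embedding_antireg_bound:
  assumes h: "bit_embedding b (antireg M) h" and n: "2 \<le> length b"
  shows "length b + repeats b (length b - 1) + (if b ! 1 = even M then 0 else 1) \<le> M"
proof -
  have first: "1 + (if b ! 1 = even M then 0 else 1) \<le> h 1"
    using bit_embedding_antireg_parity[OF h, of 1] n by (cases "h 1 = 1") auto
  have span: "h 1 + (j - 1) + repeats b j \<le> h j" if "1 \<le> j" "j < length b" for j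
    using that
  proof (induction j rule: dec_induct)
    case base
    then show ?case by (simp add: repeats_def)
  next
    case (step j)
    then show ?case
      using bit_embedding_antireg_gap[OF h, of j] by (auto simp: repeats_Suc)
  qed
  have "h 1 + (length b - 2) + repeats b (length b - 1) \<le> h (length b - 1)"
    using span[of "length b - 1"] n by (simp add: numeral_2_eq_2)
  moreover have "h (length b - 1) < M"
    using h n unfolding bit_embedding_def by simp
  ultimately show ?thesis
    using first n by linarith
qed

lemma bit_embedding_antireg_exists:
  assumes n: "2 \<le> length b"
    and M: "length b + repeats b (length b - 1) + (if b ! 1 = even M then 0 else 1) \<le> M"
  shows "\<exists>h. bit_embedding b (antireg M) h"
proof -
  define p :: nat where "p = (if b ! 1 = even M then 1 else 2)"
  define h where "h j = (if j = 0 then 0 else p + (j - 1) + repeats b j)" for j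
  have h_Suc: "h (Suc j) = h j + (if b ! j = b ! Suc j then 2 else 1)" if "1 \<le> j" for j
    using that by (simp add: h_def repeats_Suc)
  have "strict_mono h"
    unfolding strict_mono_Suc_iff
  proof
    fix j show "h j < h (Suc j)"
      using h_Suc[of j] by (cases "j = 0") (auto simp: h_def p_def repeats_def)
  qed
  then have mono: "strict_mono_on {..<length b} h"
    by (simp add: strict_mono_def strict_mono_on_def)
  have rng: "h i < M" if "i < length b" for i
  proof -
    have "h i \<le> h (length b - 1)"
      using that \<open>strict_mono h\<close> by (simp add: strict_mono_less_eq)
    also have "\<dots> < M"
      using n M by (simp add: h_def p_def split: if_splits)
    finally show ?thesis .
  qed
  have parity: "odd (M + h j) = b ! j" if "1 \<le> j" "j < length b" for j
    using that
  proof (induction j rule: dec_induct)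
    case base
    then show ?case by (auto simp: h_def p_def repeats_def)
  next
    case (step j)
    then show ?case using h_Suc[of j] by auto
  qed
  have bits: "antireg M ! h i = b ! i" if "1 \<le> i" "i < length b" for i
  proof -
    have "1 \<le> h i"
      using that by (simp add: h_def p_def)
    then show ?thesis
      using antireg_nth[OF _ rng[OF that(2)]] parity[OF that] by simp
  qed
  have "bit_embedding b (antireg M) h"
    unfolding bit_embedding_def using mono rng bits by simp
  then show ?thesis by blast
qed

lemma induced_sub_antireg_iff:
  assumes "2 \<le> length b"
  shows "induced_sub b (antireg M) \<longleftrightarrow>
    length b + repeats b (length b - 1) + (if b ! 1 = even M then 0 else 1) \<le> M"
  using bit_embedding_antireg_bound bit_embedding_antireg_exists assms
  unfolding induced_sub_iff_bit_embedding by blast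

fun changes :: "bool list \<Rightarrow> nat" where
  "changes (x # y # r) = (if x = y then 0 else 1) + changes (y # r)"
| "changes _ = 0"

lemma changes_eq_count:
  "changes b = length (filter (\<lambda>i. b ! i \<noteq> b ! Suc i) [0..<length b - 1])"
proof (induction b rule: changes.induct)
  case (1 x y r)
  have "[0..<length (x # y # r) - 1] = 0 # map Suc [0..<length (y # r) - 1]"
    by (simp add: upt_conv_Cons map_Suc_upt del: upt_Suc)
  then show ?case
    using 1 by (simp add: filter_map comp_def)
qed auto

lemma repeats_add_changes:
  assumes "2 \<le> length b"
  shows "repeats b (length b - 1) + changes b = length b - 2 + (if b ! 0 = b ! 1 then 0 else 1)"
proof -
  have "[0..<length b - 1] = 0 # [1..<length b - 1]"
    using assms by (simp add: upt_conv_Cons)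
  then have "changes b = (if b ! 0 = b ! 1 then 0 else 1)
      + length (filter (\<lambda>i. b ! i \<noteq> b ! Suc i) [1..<length b - 1])"
    by (simp add: changes_eq_count)
  then show ?thesis
    using sum_length_filter_compl[of "\<lambda>i. b ! i = b ! Suc i" "[1..<length b - 1]"]
    unfolding repeats_def by simp
qed

lemma block_string_Cons:
  "block_string (a # s) (b # t) = replicate a False @ replicate b True @ block_string s t"
  by (simp add: block_string_def upt_conv_Cons map_Suc_upt[symmetric] comp_def del: upt_Suc)

lemma changes_Cons_replicate: "changes (x # replicate a x @ r) = changes (x # r)"
  by (induction a) auto

lemma changes_True_block_string:
  "length s = length t \<Longrightarrow> 0 \<notin> set s \<Longrightarrow> 0 \<notin> set t \<Longrightarrow>
    changes (True # block_string s t) = 2 * length s"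
proof (induction s t rule: list_induct2)
  case Nil
  then show ?case by (simp add: block_string_def)
next
  case (Cons a s b t)
  obtain a' b' where "a = Suc a'" "b = Suc b'"
    using Cons.prems by (metis list.set_intros(1) not0_implies_Suc)
  then show ?case
    using Cons changes_Cons_replicate[of False a'] changes_Cons_replicate[of True b']
    by (simp add: block_string_Cons)
qed

theorem theorem3p1:
  fixes s t :: "nat list" and k n N :: nat
  assumes "length s = k" and "length t = k" and "k \<ge> 1"
    and "\<forall>i<k. s ! i \<ge> 1 \<and> t ! i \<ge> 1"
    and "n = length (block_string s t)"
    and "N = (if s ! 0 = 1 then 2 * (n - k) else 2 * (n - k) - 1)"
  shows "n \<ge> 2
    \<and> induced_sub (block_string s t) (antireg (2 * n - 2))
    \<and> induced_sub (block_string s t) (antireg N)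
    \<and> (\<forall>M. induced_sub (block_string s t) (antireg M) \<longrightarrow> N \<le> M)"
proof -
  define B where "B = block_string s t"
  have pos: "0 \<notin> set s" "0 \<notin> set t"
    using assms(1,2,4) by (auto simp: in_set_conv_nth)
  obtain a s' b t' where s: "s = a # s'" and t: "t = b # t'"
    using assms(1-3) by (cases s; cases t) auto
  obtain a' b' where a: "a = Suc a'" and b: "b = Suc b'"
    using pos s t by (metis list.set_intros(1) not0_implies_Suc)
  have B: "B = False # replicate a' False @ True # replicate b' True @ block_string s' t'"
    unfolding B_def s t a b by (simp add: block_string_Cons)
  have n: "2 \<le> n" "length B = n"
    using B assms(5) unfolding B_def by auto
  have B0: "B ! 0 = False" and B1: "B ! 1 = (a = 1)"
    using B a by (cases a'; simp)+
  have "changes (True # B) = 2 * k"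
    using changes_True_block_string[of s t] assms(1,2) pos unfolding B_def by simp
  then have "changes B = 2 * k - 1"
    using B by simp
  then have rep: "repeats B (n - 1) + (2 * k - 1) = n - 2 + (if a = 1 then 1 else 0)"
    using repeats_add_changes[of B] n B0 B1 by simp
  have N: "N = n + repeats B (n - 1)" and even_N: "even N \<longleftrightarrow> a = 1"
    using assms(3,6) rep s n(1) by auto
  have "n + repeats B (n - 1) + (if a = 1 then 0 else 1) \<le> 2 * n - 2"
    using assms(3) rep n(1) by auto
  then show ?thesis
    using induced_sub_antireg_iff[of B] n B1 N even_N unfolding B_def[symmetric] by auto
qed

end
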